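(* Consider the robust Bayesian persuasion setting described in the context with monotonic Receiver utilities. For every number of states $n$ and every prior $\mu=(\mu_1,\dots,\mu_n)$ with full support, $$\mathrm{Reg}_{\mathrm{MON}}=\begin{cases}\frac{1}{e} & \text{if } \mu_n\le \frac1e,\\ -\mu_n\ln\mu_n & \text{if } \mu_n>\frac1e.\end{cases}$$
   Context: Setting: a finite state space $\Omega=[n]=\{1,\dots,n\}$ and a publicly known prior $\mu\in\Delta(\Omega)$ with $\mu_i>0$ for all $i$. A signaling scheme is a stochastic map $\pi$ from $\Omega$ to a (finite or infinite) signal set $S$; Sender commits to $\pi$, the state $\omega\sim\mu$ is drawn, a signal $s\sim\pi(\omega)$ is sent, and Receiver forms the Bayesian posterior $p(s)\in\Delta(\Omega)$. Receiver has actions $\{0,1\}$ (reject/adopt) and utility $u_r:\Omega\times\{0,1\}\to\mathbb{R}$ with $u_r(i,0)=0$ for all $i$; Receiver adopts at posterior $p$ iff $\mathbb{E}_{\omega'\sim p}[u_r(\omega',1)]\ge 0$ (ties broken in favor of adoption). Sender's utility from $\pi$ is $u(\pi,u_r)=\Pr_{s}[\text{Receiver adopts at } p(s)]$. Let $u^*(u_r)=\sup_\pi u(\pi,u_r)$. For a class $\mathcal{U}$ of Receiver utilities, $\mathrm{Reg}(\pi)=\sup_{u_r\in\mathcal{U}}\{u^*(u_r)-u(\pi,u_r)\}$ and $\mathrm{Reg}=\inf_\pi \mathrm{Reg}(\pi)$. $\mathrm{Reg}_{\mathrm{MON}}$ denotes this regret when $\mathcal{U}$ is the class of Receiver utilities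 for which $i\mapsto u_r(i,1)$ is non-decreasing in the state $i\in[n]$. *)

theory Defs
  imports "HOL-Probability.Probability"
begin

text \<open>States are 1..n, prior mu :: nat => real (only mu 1..mu n matter).
  A signaling scheme is a stochastic map from states to a signal space: a family of
  probability measures pi i (i = 1..n) on a common measurable signal space (signals
  are represented as reals with an arbitrary sigma-algebra).\<close>

definition scheme :: "nat \<Rightarrow> (nat \<Rightarrow> real measure) \<Rightarrow> bool" where
  "scheme n \<pi> \<longleftrightarrow> (\<forall>i\<in>{1..n}. prob_space (\<pi> i)) \<and>
                    (\<forall>i\<in>{1..n}. sets (\<pi> i) = sets (\<pi> 1))"

definition signal_dist :: "nat \<Rightarrow> (nat \<Rightarrow> real) \<Rightarrow> (nat \<Rightarrow> real measure) \<Rightarrow> real measure" where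
  "signal_dist n \<mu> \<pi> = measure_of (space (\<pi> 1)) (sets (\<pi> 1))
      (\<lambda>A. \<Sum>i=1..n. ennreal (\<mu> i) * emeasure (\<pi> i) A)"

definition posterior :: "nat \<Rightarrow> (nat \<Rightarrow> real) \<Rightarrow> (nat \<Rightarrow> real measure) \<Rightarrow> nat \<Rightarrow> real \<Rightarrow> real" where
  "posterior n \<mu> \<pi> i s = \<mu> i * enn2real (RN_deriv (signal_dist n \<mu> \<pi>) (\<pi> i) s)"

text \<open>Receiver utility: u i = u_r(i,1) (adopt); u_r(i,0) = 0. Receiver adopts iff the
  posterior expected utility of adopting is >= 0. Sender utility = probability of adoption.\<close>
definition sender_util :: "nat \<Rightarrow> (nat \<Rightarrow> real) \<Rightarrow> (nat \<Rightarrow> real measure) \<Rightarrow> (nat \<Rightarrow> real) \<Rightarrow> real" where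
  "sender_util n \<mu> \<pi> u = measure (signal_dist n \<mu> \<pi>)
      {s \<in> space (signal_dist n \<mu> \<pi>). (\<Sum>i=1..n. posterior n \<mu> \<pi> i s * u i) \<ge> 0}"

definition opt_util :: "nat \<Rightarrow> (nat \<Rightarrow> real) \<Rightarrow> (nat \<Rightarrow> real) \<Rightarrow> real" where
  "opt_util n \<mu> u = (SUP \<pi>\<in>{\<pi>. scheme n \<pi>}. sender_util n \<mu> \<pi> u)"

definition mon_util :: "nat \<Rightarrow> (nat \<Rightarrow> real) \<Rightarrow> bool" where
  "mon_util n u \<longleftrightarrow> (\<forall>i j. 1 \<le> i \<longrightarrow> i \<le> j \<longrightarrow> j \<le> n \<longrightarrow> u i \<le> u j)"

definition regret_MON :: "nat \<Rightarrow> (nat \<Rightarrow> real) \<Rightarrow> (nat \<Rightarrow> real measure) \<Rightarrow> real" where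
  "regret_MON n \<mu> \<pi> = (SUP u\<in>{u. mon_util n u}. opt_util n \<mu> u - sender_util n \<mu> \<pi> u)"

definition Reg_MON :: "nat \<Rightarrow> (nat \<Rightarrow> real) \<Rightarrow> real" where
  "Reg_MON n \<mu> = (INF \<pi>\<in>{\<pi>. scheme n \<pi>}. regret_MON n \<mu> \<pi>)"

end

theory Submission
  imports Defs
begin

(* Write \<beta> = max \<mu>\<^sub>n (1/e); the regret is -\<beta> ln \<beta>.
  For a monotone Receiver, the posterior mass vector adopted under any scheme is dominated by
  the top allocation of the same total mass, drawn greedily from the highest states.  Hence a
  scheme revealing top allocations whose masses form a geometric grid from \<beta> to 1 loses,
  against any other scheme, at most the mass between consecutive grid points, which adds up
  to -\<beta> ln \<beta> plus the mesh.  Conversely, the utility "adopt iff the posterior of state n is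
  at least \<theta>" has optimal value \<mu>\<^sub>n / \<theta>, while for thresholds \<theta> on a geometric grid from
  \<mu>\<^sub>n to \<mu>\<^sub>n / \<beta> the suitably weighted adoption probabilities of any scheme sum to at
  most \<mu>\<^sub>n; letting the mesh go to 0 forces regret at least -\<beta> ln \<beta>. *)

lemma le_of_le_plus_div_Suc:
  fixes a b c :: real
  assumes "\<And>m. a \<le> b + c / real (Suc m)"
  shows "a \<le> b"
proof (rule LIMSEQ_le_const)
  show "(\<lambda>m. b + c / real (Suc m)) \<longlonglongrightarrow> b"
    using tendsto_add[OF tendsto_const LIMSEQ_Suc[OF lim_const_over_n[of c]]] by simp
qed (use assms in blast)

lemma one_minus_exp_minus_le: "1 - exp (- x) \<le> (x :: real)"
  using exp_ge_add_one_self[of "- x"] by simp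

lemma one_minus_exp_minus_ge:
  fixes x :: real
  assumes "0 \<le> x"
  shows "x / (1 + x) \<le> 1 - exp (- x)"
proof -
  have "exp (- x) \<le> 1 / (1 + x)"
    using exp_ge_add_one_self[of x] assms by (simp add: exp_minus field_simps)
  then show ?thesis
    using assms by (simp add: field_simps)
qed

definition increment :: "(nat \<Rightarrow> real) \<Rightarrow> nat \<Rightarrow> real" where
  "increment \<theta> k = (case k of 0 \<Rightarrow> \<theta> 0 | Suc j \<Rightarrow> \<theta> (Suc j) - \<theta> j)"

lemma increment_0 [simp]: "increment \<theta> 0 = \<theta> 0"
  and increment_Suc [simp]: "increment \<theta> (Suc k) = \<theta> (Suc k) - \<theta> k"
  unfolding increment_def by simp_all

lemma sum_increment: "(\<Sum>k\<le>m. increment \<theta> k) = \<theta> m"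
  by (induction m) simp_all

lemma increment_nonneg: "incseq \<theta> \<Longrightarrow> 0 \<le> \<theta> 0 \<Longrightarrow> 0 \<le> increment \<theta> k"
  by (cases k) (simp_all add: incseq_SucD)

text \<open>The indices \<open>k\<close> with \<open>\<theta> k * P \<le> q\<close> form an initial segment, over which the
  increments telescope.\<close>

lemma sum_increment_threshold_le:
  fixes \<theta> :: "nat \<Rightarrow> real"
  assumes mono: "incseq \<theta>" and "0 \<le> \<theta> 0" "0 \<le> P" "0 \<le> q"
  shows "(\<Sum>k\<le>m. increment \<theta> k * (if \<theta> k * P \<le> q then P else 0)) \<le> min q (\<theta> m * P)"
proof (induction m)
  case 0
  then show ?case
    using assms by simp
next
  case (Suc m)
  have "\<theta> m * P \<le> \<theta> (Suc m) * P"
    using mono \<open>0 \<le> P\<close> by (simp add: incseq_SucD mult_right_mono)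
  then show ?case
    using Suc.IH by (auto simp: algebra_simps)
qed

lemma sum_increment_geometric:
  fixes p x :: real
  assumes "0 < p"
  shows "(\<Sum>k\<le>N. increment (\<lambda>k. p * exp (real k * x)) k / (p * exp (real k * x)))
    = 1 + N * (1 - exp (- x))"
proof -
  have "increment (\<lambda>k. p * exp (real k * x)) (Suc j) / (p * exp (real (Suc j) * x))
      = 1 - exp (- x)" for j
    using assms by (simp add: field_simps distrib_right exp_add exp_minus)
  then show ?thesis
    using assms by (simp add: sum.atMost_shift)
qed

section \<open>Top allocations\<close>

locale prior =
  fixes n :: nat and \<mu> :: "nat \<Rightarrow> real"
  assumes n_ge_1: "n \<ge> 1"
    and prior_positive: "\<forall>i\<in>{1..n}. \<mu> i > 0"
    and prior_sum: "(\<Sum>i=1..n. \<mu> i) = 1"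
begin

lemma prior_pos: "i \<in> {1..n} \<Longrightarrow> 0 < \<mu> i"
  using prior_positive by blast

lemma prior_nonneg: "i \<in> {1..n} \<Longrightarrow> 0 \<le> \<mu> i"
  using prior_positive by (meson less_imp_le)

lemma prior_last_pos: "0 < \<mu> n"
  using prior_pos n_ge_1 by simp

lemma prior_last_le_1: "\<mu> n \<le> 1"
  using n_ge_1 prior_nonneg member_le_sum[of n "{1..n}" \<mu>] prior_sum by simp

definition tail :: "nat \<Rightarrow> real" where
  "tail i = (\<Sum>j=i..n. \<mu> j)"

text \<open>Drawing the mass \<open>z\<close> from the prior greedily, highest states first, takes
  \<open>top_mass i z\<close> from state \<open>i\<close>.\<close>

definition top_mass :: "nat \<Rightarrow> real \<Rightarrow> real" where
  "top_mass i z = min z (tail i) - min z (tail (Suc i))"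

definition top_value :: "(nat \<Rightarrow> real) \<Rightarrow> real \<Rightarrow> real" where
  "top_value u z = (\<Sum>i=1..n. u i * top_mass i z)"

lemma tail_Suc: "1 \<le> i \<Longrightarrow> i \<le> n \<Longrightarrow> tail i = \<mu> i + tail (Suc i)"
  unfolding tail_def by (simp add: sum.atLeast_Suc_atMost)

lemma tail_1: "tail 1 = 1"
  unfolding tail_def using prior_sum by simp

lemma tail_last: "tail n = \<mu> n"
  unfolding tail_def by simp

lemma tail_beyond: "tail (Suc n) = 0"
  unfolding tail_def by simp

lemma tail_antimono: "1 \<le> i \<Longrightarrow> i \<le> j \<Longrightarrow> tail j \<le> tail i"
  unfolding tail_def using prior_nonneg by (intro sum_mono2) auto

lemma top_mass_nonneg: "1 \<le> i \<Longrightarrow> 0 \<le> top_mass i z"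
  unfolding top_mass_def using tail_antimono[of i "Suc i"] by (auto simp: min_def)

lemma top_mass_le_prior: "1 \<le> i \<Longrightarrow> i \<le> n \<Longrightarrow> top_mass i z \<le> \<mu> i"
  unfolding top_mass_def using tail_Suc[of i] tail_antimono[of i "Suc i"] by (auto simp: min_def)

lemma top_mass_eq_0: "1 \<le> i \<Longrightarrow> z \<le> tail (Suc i) \<Longrightarrow> top_mass i z = 0"
  unfolding top_mass_def using tail_antimono[of i "Suc i"] by (auto simp: min_def)

lemma top_mass_eq_prior: "1 \<le> i \<Longrightarrow> i \<le> n \<Longrightarrow> tail i \<le> z \<Longrightarrow> top_mass i z = \<mu> i"
  unfolding top_mass_def using tail_Suc[of i] tail_antimono[of i "Suc i"] by (auto simp: min_def)

lemma top_mass_last: "0 \<le> z \<Longrightarrow> top_mass n z = min z (\<mu> n)"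
  unfolding top_mass_def using tail_last tail_beyond by simp

lemma sum_top_mass: "0 \<le> z \<Longrightarrow> z \<le> 1 \<Longrightarrow> (\<Sum>i=1..n. top_mass i z) = z"
proof -
  assume z: "0 \<le> z" "z \<le> 1"
  have "(\<Sum>i=1..n. top_mass i z) = - (\<Sum>i=1..n. min z (tail (Suc i)) - min z (tail i))"
    unfolding top_mass_def by (simp add: sum_negf[symmetric])
  also have "\<dots> = min z (tail 1) - min z (tail (Suc n))"
    using n_ge_1 by (subst sum_Suc_diff) auto
  finally show ?thesis
    using z tail_1 tail_beyond by simp
qed

lemma tail_bracket:
  assumes "0 \<le> z" "z \<le> 1"
  obtains k where "k \<in> {1..n}" "tail (Suc k) \<le> z" "z \<le> tail k"
proof -
  define K where "K = {k\<in>{1..n}. z \<le> tail k}"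
  have "1 \<in> K"
    unfolding K_def using n_ge_1 assms tail_1 by auto
  then have "Max K \<in> K"
    unfolding K_def by (intro Max_in) auto
  moreover have "tail (Suc (Max K)) \<le> z"
  proof (cases "Max K = n")
    case True
    then show ?thesis using tail_beyond assms by simp
  next
    case False
    then have "Suc (Max K) \<in> {1..n}"
      using \<open>Max K \<in> K\<close> unfolding K_def by auto
    moreover have "Suc (Max K) \<notin> K"
      using Max_ge[of K "Suc (Max K)"] unfolding K_def by fastforce
    ultimately show ?thesis
      unfolding K_def by auto
  qed
  ultimately show ?thesis
    using that unfolding K_def by auto
qed

text \<open>Exchange argument: with \<open>k\<close> as in \<open>tail_bracket\<close>, the top allocation is empty
  below \<open>k\<close> and full above \<open>k\<close>, so every term \<open>(top_mass i z - x i) * (u i - u k)\<close>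
  is nonnegative.\<close>

lemma weighted_sum_le_top_value:
  assumes mon: "mon_util n u"
    and x: "\<And>i. i \<in> {1..n} \<Longrightarrow> 0 \<le> x i \<and> x i \<le> \<mu> i"
  shows "(\<Sum>i=1..n. u i * x i) \<le> top_value u (\<Sum>i=1..n. x i)"
proof -
  define z where "z = (\<Sum>i=1..n. x i)"
  have z0: "0 \<le> z"
    unfolding z_def using x by (intro sum_nonneg) auto
  have z1: "z \<le> 1"
    unfolding z_def using x prior_sum by (metis sum_mono)
  obtain k where k: "k \<in> {1..n}" "tail (Suc k) \<le> z" "z \<le> tail k"
    using tail_bracket[OF z0 z1] .
  have "0 \<le> (top_mass i z - x i) * (u i - u k)" if i: "i \<in> {1..n}" for i
  proof (cases i k rule: linorder_cases)
    case less
    then have "top_mass i z = 0"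
      using i k tail_antimono[of "Suc i" k] by (intro top_mass_eq_0) auto
    moreover have "u i \<le> u k"
      using mon less i k unfolding mon_util_def by auto
    ultimately show ?thesis
      using x[OF i] by (simp add: mult_nonneg_nonpos)
  next
    case greater
    then have "top_mass i z = \<mu> i"
      using i k tail_antimono[of "Suc k" i] by (intro top_mass_eq_prior) auto
    moreover have "u k \<le> u i"
      using mon greater i k unfolding mon_util_def by auto
    ultimately show ?thesis
      using x[OF i] by simp
  qed simp
  then have "0 \<le> (\<Sum>i=1..n. (top_mass i z - x i) * (u i - u k))"
    by (intro sum_nonneg) auto
  also have "\<dots> = top_value u z - (\<Sum>i=1..n. u i * x i)
      - u k * ((\<Sum>i=1..n. top_mass i z) - z)"
    unfolding top_value_def z_def
    by (simp add: algebra_simps sum_subtractf sum_distrib_left sum.distrib)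
  finally show ?thesis
    using sum_top_mass[OF z0 z1] unfolding z_def by simp
qed

text \<open>The top allocation of mass \<open>s\<close>, scaled down to total mass \<open>d\<close>, is feasible.\<close>

lemma top_value_nonneg_below:
  assumes mon: "mon_util n u" and d: "0 \<le> d" "d \<le> s" and s: "0 < s" "s \<le> 1"
    and nonneg: "0 \<le> top_value u s"
  shows "0 \<le> top_value u d"
proof -
  define x where "x i = d / s * top_mass i s" for i
  have x: "0 \<le> x i \<and> x i \<le> \<mu> i" if i: "i \<in> {1..n}" for i
  proof -
    have "d / s \<le> 1" "0 \<le> d / s"
      using d s by auto
    moreover have "d / s * top_mass i s \<le> 1 * \<mu> i"
      using i top_mass_nonneg[of i s] top_mass_le_prior[of i s] \<open>d / s \<le> 1\<close> \<open>0 \<le> d / s\<close>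
      by (intro mult_mono) auto
    ultimately show ?thesis
      unfolding x_def using i top_mass_nonneg[of i s] by (simp del: times_divide_eq_left)
  qed
  have "(\<Sum>i=1..n. x i) = d / s * (\<Sum>i=1..n. top_mass i s)"
    unfolding x_def by (simp add: sum_distrib_left)
  also have "\<dots> = d"
    using sum_top_mass[of s] s by simp
  finally have "(\<Sum>i=1..n. u i * x i) \<le> top_value u d"
    using weighted_sum_le_top_value[OF mon x] by simp
  moreover have "(\<Sum>i=1..n. u i * x i) = d / s * top_value u s"
    unfolding x_def top_value_def by (simp add: sum_distrib_left algebra_simps)
  moreover have "0 \<le> d / s * top_value u s"
    using nonneg d s by simp
  ultimately show ?thesis
    by linarith
qed

lemma top_value_prior_last: "top_value u (\<mu> n) = u n * \<mu> n"
proof -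
  have "top_value u (\<mu> n) = (\<Sum>i=1..n. if i = n then u n * \<mu> n else 0)"
    unfolding top_value_def
  proof (intro sum.cong refl)
    fix i assume i: "i \<in> {1..n}"
    show "u i * top_mass i (\<mu> n) = (if i = n then u n * \<mu> n else 0)"
      using i top_mass_last prior_last_pos tail_last tail_antimono[of "Suc i" n]
      by (auto intro: top_mass_eq_0)
  qed
  also have "\<dots> = u n * \<mu> n"
    using n_ge_1 by simp
  finally show ?thesis .
qed

end

section \<open>Signaling schemes\<close>

locale signaling_scheme = prior +
  fixes \<pi> :: "nat \<Rightarrow> real measure"
  assumes scheme: "scheme n \<pi>"
begin

abbreviation \<nu> :: "real measure" where
  "\<nu> \<equiv> signal_dist n \<mu> \<pi>"

abbreviation post :: "nat \<Rightarrow> real \<Rightarrow> real" where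
  "post i \<equiv> posterior n \<mu> \<pi> i"

lemma prob_space_scheme: "i \<in> {1..n} \<Longrightarrow> prob_space (\<pi> i)"
  using scheme unfolding scheme_def by blast

lemma sets_scheme: "i \<in> {1..n} \<Longrightarrow> sets (\<pi> i) = sets (\<pi> 1)"
  using scheme unfolding scheme_def by blast

lemma sets_signal_dist: "sets \<nu> = sets (\<pi> 1)"
  unfolding signal_dist_def
  by (rule sigma_algebra.sets_measure_of_eq[OF sets.sigma_algebra_axioms])

lemma space_signal_dist: "space \<nu> = space (\<pi> 1)"
  unfolding signal_dist_def
  by (rule sigma_algebra.space_measure_of_eq[OF sets.sigma_algebra_axioms])

lemma sets_scheme_signal_dist: "i \<in> {1..n} \<Longrightarrow> sets (\<pi> i) = sets \<nu>"
  using sets_scheme sets_signal_dist by metis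

lemma space_scheme_signal_dist: "i \<in> {1..n} \<Longrightarrow> space (\<pi> i) = space \<nu>"
  using sets_scheme_signal_dist sets_eq_imp_space_eq by blast

lemma emeasure_signal_dist:
  assumes A: "A \<in> sets \<nu>"
  shows "emeasure \<nu> A = (\<Sum>i=1..n. ennreal (\<mu> i) * emeasure (\<pi> i) A)"
  unfolding signal_dist_def
proof (rule emeasure_measure_of_sigma[OF sets.sigma_algebra_axioms])
  show "countably_additive (sets (\<pi> 1)) (\<lambda>A. \<Sum>i=1..n. ennreal (\<mu> i) * emeasure (\<pi> i) A)"
    unfolding countably_additive_def
  proof (intro allI impI)
    fix F :: "nat \<Rightarrow> real set"
    assume F: "range F \<subseteq> sets (\<pi> 1)" "disjoint_family F"
    have "(\<Sum>j. emeasure (\<pi> i) (F j)) = emeasure (\<pi> i) (\<Union> (range F))" if i: "i \<in> {1..n}" for i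
      using F sets_scheme[OF i] by (intro suminf_emeasure) auto
    then have "(\<Sum>i=1..n. \<Sum>j. ennreal (\<mu> i) * emeasure (\<pi> i) (F j))
        = (\<Sum>i=1..n. ennreal (\<mu> i) * emeasure (\<pi> i) (\<Union> (range F)))"
      by (intro sum.cong refl) simp
    then show "(\<Sum>j. \<Sum>i=1..n. ennreal (\<mu> i) * emeasure (\<pi> i) (F j))
        = (\<Sum>i=1..n. ennreal (\<mu> i) * emeasure (\<pi> i) (\<Union> (range F)))"
      by (subst suminf_sum) auto
  qed
  show "A \<in> sets (\<pi> 1)"
    using A sets_signal_dist by simp
qed (simp add: positive_def)

lemma measure_signal_dist:
  assumes A: "A \<in> sets \<nu>"
  shows "measure \<nu> A = (\<Sum>i=1..n. \<mu> i * measure (\<pi> i) A)"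
proof -
  have "emeasure \<nu> A = (\<Sum>i=1..n. ennreal (\<mu> i * measure (\<pi> i) A))"
    unfolding emeasure_signal_dist[OF A] using prob_space_scheme prior_nonneg
    by (intro sum.cong refl)
      (simp add: finite_measure.emeasure_eq_measure[OF prob_space.finite_measure] ennreal_mult)
  also have "\<dots> = ennreal (\<Sum>i=1..n. \<mu> i * measure (\<pi> i) A)"
    using prior_nonneg by (intro sum_ennreal) auto
  moreover have "0 \<le> (\<Sum>i=1..n. \<mu> i * measure (\<pi> i) A)"
    using prior_nonneg by (intro sum_nonneg) auto
  ultimately show ?thesis
    by (simp add: measure_def)
qed

lemma prob_space_signal_dist: "prob_space \<nu>"
proof
  have "emeasure (\<pi> i) (space \<nu>) = 1" if i: "i \<in> {1..n}" for i
    using prob_space.emeasure_space_1[OF prob_space_scheme[OF i]] space_scheme_signal_dist[OF i]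
    by simp
  then have "emeasure \<nu> (space \<nu>) = (\<Sum>i=1..n. ennreal (\<mu> i))"
    unfolding emeasure_signal_dist[OF sets.top] by simp
  also have "\<dots> = 1"
    using prior_nonneg prior_sum by (subst sum_ennreal) auto
  finally show "emeasure \<nu> (space \<nu>) = 1" .
qed

interpretation signal: prob_space \<nu>
  by (rule prob_space_signal_dist)

lemma absolutely_continuous_scheme: "i \<in> {1..n} \<Longrightarrow> absolutely_continuous \<nu> (\<pi> i)"
  unfolding absolutely_continuous_def
proof
  fix A assume i: "i \<in> {1..n}" and A: "A \<in> null_sets \<nu>"
  then have "(\<Sum>j=1..n. ennreal (\<mu> j) * emeasure (\<pi> j) A) = 0"
    using emeasure_signal_dist[OF null_setsD2[OF A]] null_setsD1[OF A] by (simp only:)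
  then have "ennreal (\<mu> i) * emeasure (\<pi> i) A = 0"
    using i sum_eq_0_iff[of "{1..n}" "\<lambda>j. ennreal (\<mu> j) * emeasure (\<pi> j) A"] by blast
  then show "A \<in> null_sets (\<pi> i)"
    using A prior_pos[OF i] sets_scheme_signal_dist[OF i] by auto
qed

lemma density_RN_deriv_scheme: "i \<in> {1..n} \<Longrightarrow> density \<nu> (RN_deriv \<nu> (\<pi> i)) = \<pi> i"
  by (intro signal.density_RN_deriv absolutely_continuous_scheme sets_scheme_signal_dist)

lemma RN_deriv_scheme_finite: "i \<in> {1..n} \<Longrightarrow> AE s in \<nu>. RN_deriv \<nu> (\<pi> i) s \<noteq> \<infinity>"
  using prob_space_scheme
  by (intro signal.RN_deriv_finite absolutely_continuous_scheme sets_scheme_signal_dist)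
    (auto intro: prob_space_imp_sigma_finite)

lemma posterior_measurable[measurable]: "post i \<in> borel_measurable \<nu>"
  unfolding posterior_def by measurable

lemma posterior_nonneg: "i \<in> {1..n} \<Longrightarrow> 0 \<le> post i s"
  unfolding posterior_def using prior_nonneg by auto

lemma nn_integral_posterior:
  assumes i: "i \<in> {1..n}" and A: "A \<in> sets \<nu>"
  shows "(\<integral>\<^sup>+s. ennreal (indicator A s * post i s) \<partial>\<nu>) = ennreal (\<mu> i * measure (\<pi> i) A)"
proof -
  have "(\<integral>\<^sup>+s. ennreal (indicator A s * post i s) \<partial>\<nu>)
      = (\<integral>\<^sup>+s. ennreal (\<mu> i) * (RN_deriv \<nu> (\<pi> i) s * indicator A s) \<partial>\<nu>)"
    using RN_deriv_scheme_finite[OF i]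
  proof (intro nn_integral_cong_AE, eventually_elim)
    case (elim s)
    then show ?case
      using prior_nonneg[OF i] unfolding posterior_def
      by (auto simp: indicator_def ennreal_mult ennreal_enn2real_if)
  qed
  also have "\<dots> = ennreal (\<mu> i) * emeasure (\<pi> i) A"
    using A density_RN_deriv_scheme[OF i] emeasure_density[of "RN_deriv \<nu> (\<pi> i)" \<nu> A]
    by (simp add: nn_integral_cmult)
  also have "\<dots> = ennreal (\<mu> i * measure (\<pi> i) A)"
    using prior_nonneg[OF i] prob_space_scheme[OF i]
    by (simp add: finite_measure.emeasure_eq_measure[OF prob_space.finite_measure] ennreal_mult)
  finally show ?thesis .
qed

lemma
  assumes i: "i \<in> {1..n}" and A: "A \<in> sets \<nu>"
  shows integrable_posterior: "integrable \<nu> (\<lambda>s. indicator A s * post i s)"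
    and integral_posterior: "(\<integral>s. indicator A s * post i s \<partial>\<nu>) = \<mu> i * measure (\<pi> i) A"
proof -
  show "integrable \<nu> (\<lambda>s. indicator A s * post i s)"
    using A nn_integral_posterior[OF i A] posterior_nonneg[OF i]
    by (intro integrableI_nn_integral_finite[where x="\<mu> i * measure (\<pi> i) A"]) auto
  show "(\<integral>s. indicator A s * post i s \<partial>\<nu>) = \<mu> i * measure (\<pi> i) A"
    using A nn_integral_posterior[OF i A] posterior_nonneg[OF i] prior_nonneg[OF i]
    by (subst integral_eq_nn_integral) simp_all
qed

lemma
  assumes A: "A \<in> sets \<nu>"
  shows integrable_weighted_posterior:
      "integrable \<nu> (\<lambda>s. indicator A s * (\<Sum>i=1..n. post i s * w i))"
    and integral_weighted_posterior:
      "(\<integral>s. indicator A s * (\<Sum>i=1..n. post i s * w i) \<partial>\<nu>) = (\<Sum>i=1..n. \<mu> i * measure (\<pi> i) A * w i)"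
proof -
  have eq: "indicator A s * (\<Sum>i=1..n. post i s * w i)
      = (\<Sum>i=1..n. indicator A s * post i s * w i)" for s
    by (simp add: sum_distrib_left mult.assoc)
  show "integrable \<nu> (\<lambda>s. indicator A s * (\<Sum>i=1..n. post i s * w i))"
    unfolding eq
    by (intro Bochner_Integration.integrable_sum integrable_mult_left integrable_posterior[OF _ A]) simp
  show "(\<integral>s. indicator A s * (\<Sum>i=1..n. post i s * w i) \<partial>\<nu>) = (\<Sum>i=1..n. \<mu> i * measure (\<pi> i) A * w i)"
    unfolding eq
    by (subst Bochner_Integration.integral_sum)
      (simp_all add: integrable_mult_left integrable_posterior[OF _ A] integral_posterior[OF _ A])
qed

definition adopt_set :: "(nat \<Rightarrow> real) \<Rightarrow> real set" where
  "adopt_set u = {s \<in> space \<nu>. 0 \<le> (\<Sum>i=1..n. post i s * u i)}"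

lemma adopt_set_sets[measurable]: "adopt_set u \<in> sets \<nu>"
  unfolding adopt_set_def by measurable

lemma sender_util_eq_measure: "sender_util n \<mu> \<pi> u = measure \<nu> (adopt_set u)"
  unfolding sender_util_def adopt_set_def by simp

lemma sender_util_nonneg: "0 \<le> sender_util n \<mu> \<pi> u"
  unfolding sender_util_eq_measure by simp

lemma sender_util_le_1: "sender_util n \<mu> \<pi> u \<le> 1"
  unfolding sender_util_eq_measure by simp

lemma sender_util_eq_sum: "sender_util n \<mu> \<pi> u = (\<Sum>i=1..n. \<mu> i * measure (\<pi> i) (adopt_set u))"
  unfolding sender_util_eq_measure by (rule measure_signal_dist[OF adopt_set_sets])

lemma sender_util_eq_integral:
  "sender_util n \<mu> \<pi> u = (\<integral>s. indicator (adopt_set u) s * (\<Sum>i=1..n. post i s) \<partial>\<nu>)"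
  using integral_weighted_posterior[OF adopt_set_sets, where w="\<lambda>_. 1"] sender_util_eq_sum by simp

lemma obedience: "0 \<le> (\<Sum>i=1..n. \<mu> i * measure (\<pi> i) (adopt_set u) * u i)"
  unfolding integral_weighted_posterior[OF adopt_set_sets, symmetric]
  by (intro integral_nonneg_AE AE_I2) (auto simp: adopt_set_def indicator_def)

end

section \<open>Schemes revealing top allocations\<close>

definition top_grid :: "nat \<Rightarrow> (nat \<Rightarrow> real) \<Rightarrow> (nat \<Rightarrow> real) \<Rightarrow> bool" where
  "top_grid N D w \<longleftrightarrow> (\<forall>k\<le>N. 0 < D k \<and> D k \<le> 1 \<and> 0 \<le> w k) \<and> (\<Sum>k\<le>N. w k) = 1"

context prior
begin

text \<open>The signal \<open>real k\<close>, \<open>k \<le> N\<close>, has total probability \<open>w k * D k\<close> and induces the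
  posterior \<open>top_mass i (D k) / D k\<close>; the signal \<open>-1\<close> carries the remaining mass.\<close>

definition top_density :: "nat \<Rightarrow> (nat \<Rightarrow> real) \<Rightarrow> (nat \<Rightarrow> real) \<Rightarrow> nat \<Rightarrow> real \<Rightarrow> real" where
  "top_density N D w i s =
     (if s = -1 then 1 - (\<Sum>k\<le>N. w k * top_mass i (D k)) / \<mu> i
      else w (nat \<lfloor>s\<rfloor>) * top_mass i (D (nat \<lfloor>s\<rfloor>)) / \<mu> i)"

definition top_scheme :: "nat \<Rightarrow> (nat \<Rightarrow> real) \<Rightarrow> (nat \<Rightarrow> real) \<Rightarrow> nat \<Rightarrow> real measure" where
  "top_scheme N D w i =
     point_measure (insert (-1) (real ` {..N})) (\<lambda>s. ennreal (top_density N D w i s))"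

lemma top_density_signal: "top_density N D w i (real k) = w k * top_mass i (D k) / \<mu> i"
  unfolding top_density_def by simp

lemma top_density_nonneg:
  assumes grid: "top_grid N D w" and i: "i \<in> {1..n}" and s: "s \<in> insert (-1) (real ` {..N})"
  shows "0 \<le> top_density N D w i s"
proof (cases "s = -1")
  case True
  have "(\<Sum>k\<le>N. w k * top_mass i (D k)) \<le> (\<Sum>k\<le>N. w k * \<mu> i)"
    using grid i top_mass_le_prior unfolding top_grid_def by (intro sum_mono mult_left_mono) auto
  also have "\<dots> = \<mu> i"
    using grid unfolding top_grid_def by (simp add: sum_distrib_right[symmetric])
  finally show ?thesis
    using True prior_pos[OF i] unfolding top_density_def by simp
next
  case False
  then obtain k where "k \<le> N" "s = real k"
    using s by auto
  then show ?thesis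
    using grid i top_mass_nonneg prior_pos[OF i] unfolding top_grid_def
    by (simp add: top_density_signal)
qed

lemma sum_top_density:
  assumes "top_grid N D w"
  shows "(\<Sum>s\<in>insert (-1) (real ` {..N}). top_density N D w i s) = 1"
proof -
  have "(\<Sum>s\<in>real ` {..N}. top_density N D w i s) = (\<Sum>k\<le>N. w k * top_mass i (D k)) / \<mu> i"
    by (subst sum.reindex) (auto simp: inj_on_def top_density_signal sum_divide_distrib)
  moreover have "-1 \<notin> real ` {..N}"
    by auto
  ultimately show ?thesis
    by (simp add: top_density_def)
qed

lemma scheme_top_scheme:
  assumes grid: "top_grid N D w"
  shows "scheme n (top_scheme N D w)"
  unfolding scheme_def
proof safe
  fix i assume i: "i \<in> {1..n}"
  have "(\<Sum>s\<in>insert (-1) (real ` {..N}). ennreal (top_density N D w i s)) = 1"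
    using top_density_nonneg[OF grid i] sum_top_density[OF grid] by (subst sum_ennreal) simp_all
  then show "prob_space (top_scheme N D w i)"
    unfolding top_scheme_def by (intro prob_space_point_measure) auto
qed (auto simp: top_scheme_def sets_point_measure)

lemma emeasure_top_scheme_signal:
  "k \<le> N \<Longrightarrow> emeasure (top_scheme N D w i) {real k} = ennreal (top_density N D w i (real k))"
  unfolding top_scheme_def by (subst emeasure_point_measure_finite) auto

lemma sets_signal_dist_top_scheme:
  assumes grid: "top_grid N D w"
  shows "sets (signal_dist n \<mu> (top_scheme N D w)) = Pow (insert (-1) (real ` {..N}))"
proof -
  interpret signaling_scheme n \<mu> "top_scheme N D w"
    by unfold_locales (rule scheme_top_scheme[OF grid])
  show ?thesis
    using sets_signal_dist by (simp add: top_scheme_def sets_point_measure)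
qed

lemma space_signal_dist_top_scheme:
  assumes grid: "top_grid N D w"
  shows "space (signal_dist n \<mu> (top_scheme N D w)) = insert (-1) (real ` {..N})"
proof -
  interpret signaling_scheme n \<mu> "top_scheme N D w"
    by unfold_locales (rule scheme_top_scheme[OF grid])
  show ?thesis
    using space_signal_dist by (simp add: top_scheme_def space_point_measure)
qed

lemma measure_signal_dist_top_scheme:
  assumes grid: "top_grid N D w" and k: "k \<le> N"
  shows "measure (signal_dist n \<mu> (top_scheme N D w)) {real k} = w k * D k"
proof -
  interpret signaling_scheme n \<mu> "top_scheme N D w"
    by unfold_locales (rule scheme_top_scheme[OF grid])
  have "measure \<nu> {real k} = (\<Sum>i=1..n. \<mu> i * top_density N D w i (real k))"
    using k sets_signal_dist_top_scheme[OF grid] top_density_nonneg[OF grid]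
    by (subst measure_signal_dist)
      (auto intro!: sum.cong simp: measure_def emeasure_top_scheme_signal)
  also have "\<dots> = (\<Sum>i=1..n. w k * top_mass i (D k))"
    using prior_pos by (intro sum.cong refl) (force simp: top_density_signal)
  also have "\<dots> = w k * (\<Sum>i=1..n. top_mass i (D k))"
    by (simp add: sum_distrib_left)
  also have "\<dots> = w k * D k"
    using grid k sum_top_mass unfolding top_grid_def by (simp add: less_imp_le)
  finally show ?thesis .
qed

lemma posterior_top_scheme_signal:
  assumes grid: "top_grid N D w" and k: "k \<le> N" "0 < w k" and i: "i \<in> {1..n}"
  shows "posterior n \<mu> (top_scheme N D w) i (real k) = top_mass i (D k) / D k"
proof -
  interpret signaling_scheme n \<mu> "top_scheme N D w"
    by unfold_locales (rule scheme_top_scheme[OF grid])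
  interpret signal: prob_space \<nu>
    by (rule prob_space_signal_dist)
  have Dk: "0 < D k"
    using grid k unfolding top_grid_def by simp
  define R where "R = enn2real (RN_deriv \<nu> (top_scheme N D w i) (real k))"
  have "emeasure (top_scheme N D w i) {real k}
      = RN_deriv \<nu> (top_scheme N D w i) (real k) * emeasure \<nu> {real k}"
    using k sets_signal_dist_top_scheme[OF grid]
    by (intro signal.RN_deriv_singleton absolutely_continuous_scheme i sets_scheme_signal_dist) auto
  then have "ennreal (top_density N D w i (real k))
      = RN_deriv \<nu> (top_scheme N D w i) (real k) * ennreal (w k * D k)"
    using k measure_signal_dist_top_scheme[OF grid k(1)]
    by (simp add: emeasure_top_scheme_signal signal.emeasure_eq_measure)
  then have "enn2real (ennreal (top_density N D w i (real k))) = R * (w k * D k)"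
    unfolding R_def using k Dk by (simp add: enn2real_mult)
  then have "w k * top_mass i (D k) = w k * (\<mu> i * R * D k)"
    using k top_density_nonneg[OF grid i, of "real k"] prior_pos[OF i]
    by (simp add: top_density_signal field_simps)
  then have "top_mass i (D k) = \<mu> i * R * D k"
    using k(2) by simp
  then show ?thesis
    using Dk unfolding posterior_def R_def by (simp add: field_simps)
qed

lemma sender_util_top_scheme_ge:
  assumes grid: "top_grid N D w"
  shows "(\<Sum>k\<in>{k\<in>{..N}. 0 \<le> top_value u (D k)}. w k * D k) \<le> sender_util n \<mu> (top_scheme N D w) u"
proof -
  interpret signaling_scheme n \<mu> "top_scheme N D w"
    by unfold_locales (rule scheme_top_scheme[OF grid])
  interpret signal: prob_space \<nu>
    by (rule prob_space_signal_dist)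
  define K where "K = {k\<in>{..N}. 0 \<le> top_value u (D k) \<and> 0 < w k}"
  have adopt: "real ` K \<subseteq> adopt_set u"
  proof safe
    fix k assume "k \<in> K"
    then have k: "k \<le> N" "0 < w k" "0 \<le> top_value u (D k)" and Dk: "0 < D k"
      using grid unfolding K_def top_grid_def by auto
    have "(\<Sum>i=1..n. post i (real k) * u i) = (\<Sum>i=1..n. u i * top_mass i (D k) / D k)"
      by (intro sum.cong refl) (simp add: posterior_top_scheme_signal[OF grid k(1,2)])
    also have "\<dots> = top_value u (D k) / D k"
      unfolding top_value_def by (simp add: sum_divide_distrib)
    finally show "real k \<in> adopt_set u"
      using k Dk space_signal_dist_top_scheme[OF grid] unfolding adopt_set_def by simp
  qed
  have "(\<Sum>k\<in>{k\<in>{..N}. 0 \<le> top_value u (D k)}. w k * D k) = (\<Sum>k\<in>K. w k * D k)"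
    unfolding K_def using grid unfolding top_grid_def
    by (intro sum.mono_neutral_right) (auto simp: less_le)
  also have "\<dots> = (\<Sum>k\<in>K. measure \<nu> {real k})"
    unfolding K_def by (simp add: measure_signal_dist_top_scheme[OF grid])
  also have "\<dots> = measure \<nu> (real ` K)"
    using sets_signal_dist_top_scheme[OF grid]
    by (subst signal.finite_measure_eq_sum_singleton) (auto simp: K_def sum.reindex inj_on_def)
  also have "\<dots> \<le> sender_util n \<mu> (top_scheme N D w) u"
    unfolding sender_util_eq_measure using adopt by (intro signal.finite_measure_mono) auto
  finally show ?thesis .
qed

end

context prior
begin

lemma schemes_nonempty: "{\<pi>. scheme n \<pi>} \<noteq> {}"
  using scheme_top_scheme[of 0 "\<lambda>_. 1" "\<lambda>_. 1"] by (auto simp: top_grid_def)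

lemma sender_util_bounds:
  assumes "scheme n \<pi>"
  shows "0 \<le> sender_util n \<mu> \<pi> u \<and> sender_util n \<mu> \<pi> u \<le> 1"
proof -
  interpret signaling_scheme n \<mu> \<pi>
    by unfold_locales fact
  show ?thesis
    using sender_util_nonneg sender_util_le_1 by simp
qed

lemma sender_util_le_opt_util: "scheme n \<pi> \<Longrightarrow> sender_util n \<mu> \<pi> u \<le> opt_util n \<mu> u"
  unfolding opt_util_def using sender_util_bounds by (intro cSUP_upper bdd_aboveI[where M=1]) auto

lemma opt_util_le: "(\<And>\<pi>. scheme n \<pi> \<Longrightarrow> sender_util n \<mu> \<pi> u \<le> c) \<Longrightarrow> opt_util n \<mu> u \<le> c"
  unfolding opt_util_def using schemes_nonempty by (intro cSUP_least) auto

lemma regret_le_regret_MON: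
  assumes "scheme n \<pi>" "mon_util n u"
  shows "opt_util n \<mu> u - sender_util n \<mu> \<pi> u \<le> regret_MON n \<mu> \<pi>"
proof -
  have "opt_util n \<mu> v - sender_util n \<mu> \<pi> v \<le> 1" for v
    using opt_util_le[of v 1] sender_util_bounds[OF assms(1), of v] sender_util_bounds by fastforce
  then show ?thesis
    unfolding regret_MON_def using assms by (intro cSUP_upper bdd_aboveI[where M=1]) auto
qed

lemma regret_MON_nonneg: "scheme n \<pi> \<Longrightarrow> 0 \<le> regret_MON n \<mu> \<pi>"
  using regret_le_regret_MON[of \<pi> "\<lambda>_. 0"] sender_util_le_opt_util[of \<pi> "\<lambda>_. 0"]
  by (fastforce simp: mon_util_def)

lemma regret_MON_le:
  "(\<And>u. mon_util n u \<Longrightarrow> opt_util n \<mu> u - sender_util n \<mu> \<pi> u \<le> c) \<Longrightarrow> regret_MON n \<mu> \<pi> \<le> c"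
  unfolding regret_MON_def by (intro cSUP_least) (auto simp: mon_util_def)

lemma Reg_MON_le_regret_MON: "scheme n \<pi> \<Longrightarrow> Reg_MON n \<mu> \<le> regret_MON n \<mu> \<pi>"
  unfolding Reg_MON_def using regret_MON_nonneg by (intro cINF_lower bdd_belowI[where m=0]) auto

lemma le_Reg_MON: "(\<And>\<pi>. scheme n \<pi> \<Longrightarrow> c \<le> regret_MON n \<mu> \<pi>) \<Longrightarrow> c \<le> Reg_MON n \<mu>"
  unfolding Reg_MON_def using schemes_nonempty by (intro cINF_greatest) auto

end

section \<open>Upper bound\<close>

text \<open>The adopted mass vector \<open>x i = \<mu> i * \<pi> i (adopt_set u)\<close> is feasible and obedient,
  so the top allocation of its total mass is obedient too; below \<open>\<mu> n\<close> the top allocation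
  lives on state \<open>n\<close> alone, where obedience forces \<open>0 \<le> u n\<close>.\<close>

lemma (in signaling_scheme) top_value_sender_util_nonneg:
  assumes mon: "mon_util n u" and pos: "0 < sender_util n \<mu> \<pi> u"
  shows "0 \<le> top_value u (max (sender_util n \<mu> \<pi> u) (\<mu> n))"
proof -
  define x where "x i = \<mu> i * measure (\<pi> i) (adopt_set u)" for i
  have x: "0 \<le> x i \<and> x i \<le> \<mu> i" if i: "i \<in> {1..n}" for i
    unfolding x_def using prior_pos[OF i] prob_space.prob_le_1[OF prob_space_scheme[OF i]]
    by (simp add: mult_left_le)
  have sender: "sender_util n \<mu> \<pi> u = (\<Sum>i=1..n. x i)"
    unfolding x_def by (rule sender_util_eq_sum)
  have obedient: "0 \<le> (\<Sum>i=1..n. u i * x i)"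
    using obedience unfolding x_def by (simp add: mult.commute)
  have "0 \<le> u n"
  proof (rule ccontr)
    assume "\<not> 0 \<le> u n"
    have "(\<Sum>i=1..n. u i * x i) \<le> (\<Sum>i=1..n. u n * x i)"
      using x mon unfolding mon_util_def by (intro sum_mono mult_right_mono) auto
    also have "\<dots> < 0"
      using \<open>\<not> 0 \<le> u n\<close> pos sender by (simp add: sum_distrib_left[symmetric] mult_neg_pos)
    finally show False
      using obedient by simp
  qed
  show ?thesis
  proof (cases "\<mu> n \<le> sender_util n \<mu> \<pi> u")
    case True
    then show ?thesis
      using weighted_sum_le_top_value[OF mon x] obedient sender by simp
  next
    case False
    then show ?thesis
      using top_value_prior_last \<open>0 \<le> u n\<close> prior_last_pos by simp
  qed
qed

context prior
begin

lemma regret_MON_top_scheme_le: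
  assumes grid: "top_grid N D w" and c: "0 \<le> c"
    and shortfall: "\<And>s. \<mu> n \<le> s \<Longrightarrow> s \<le> 1 \<Longrightarrow> s - (\<Sum>k\<in>{k\<in>{..N}. D k \<le> s}. w k * D k) \<le> c"
  shows "regret_MON n \<mu> (top_scheme N D w) \<le> c"
proof (rule regret_MON_le)
  fix u assume mon: "mon_util n u"
  have "opt_util n \<mu> u \<le> sender_util n \<mu> (top_scheme N D w) u + c"
  proof (rule opt_util_le)
    fix \<pi> assume "scheme n \<pi>"
    interpret signaling_scheme n \<mu> \<pi>
      by unfold_locales fact
    define s where "s = max (sender_util n \<mu> \<pi> u) (\<mu> n)"
    have s: "\<mu> n \<le> s" "s \<le> 1" "0 < s"
      unfolding s_def using sender_util_le_1 prior_last_le_1 prior_last_pos by auto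
    show "sender_util n \<mu> \<pi> u \<le> sender_util n \<mu> (top_scheme N D w) u + c"
    proof (cases "0 < sender_util n \<mu> \<pi> u")
      case True
      have "0 \<le> top_value u s"
        unfolding s_def by (rule top_value_sender_util_nonneg[OF mon True])
      then have "{k\<in>{..N}. D k \<le> s} \<subseteq> {k\<in>{..N}. 0 \<le> top_value u (D k)}"
        using grid s top_value_nonneg_below[OF mon] unfolding top_grid_def by auto
      then have "(\<Sum>k\<in>{k\<in>{..N}. D k \<le> s}. w k * D k)
          \<le> (\<Sum>k\<in>{k\<in>{..N}. 0 \<le> top_value u (D k)}. w k * D k)"
        using grid unfolding top_grid_def by (intro sum_mono2) auto
      also have "\<dots> \<le> sender_util n \<mu> (top_scheme N D w) u"
        by (rule sender_util_top_scheme_ge[OF grid])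
      finally show ?thesis
        using shortfall[OF s(1,2)] unfolding s_def by linarith
    next
      case False
      then show ?thesis
        using c sender_util_bounds[OF scheme_top_scheme[OF grid], of u] by linarith
    qed
  qed
  then show "opt_util n \<mu> u - sender_util n \<mu> (top_scheme N D w) u \<le> c"
    by linarith
qed

end

definition geometric_grid :: "real \<Rightarrow> real \<Rightarrow> nat \<Rightarrow> real" where
  "geometric_grid b x k = b * exp (real k * x)"

text \<open>With these weights \<open>w (Suc k) * D (Suc k) = D (Suc k) - D k\<close>: the grid pays out the
  increments of the geometric sequence.\<close>

definition geometric_weight :: "nat \<Rightarrow> real \<Rightarrow> nat \<Rightarrow> real" where
  "geometric_weight N x k = (if k = 0 then 1 - N * (1 - exp (- x)) else 1 - exp (- x))"

lemma geometric_weight_0: "geometric_weight N x 0 = 1 - N * (1 - exp (- x))"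
  and geometric_weight_Suc: "geometric_weight N x (Suc k) = 1 - exp (- x)"
  unfolding geometric_weight_def by simp_all

lemma geometric_grid_Suc: "geometric_grid b x k = geometric_grid b x (Suc k) * exp (- x)"
  unfolding geometric_grid_def by (simp add: distrib_right mult.assoc exp_add[symmetric])

lemma geometric_grid_mono:
  "0 < b \<Longrightarrow> 0 \<le> x \<Longrightarrow> j \<le> k \<Longrightarrow> geometric_grid b x j \<le> geometric_grid b x k"
  unfolding geometric_grid_def by (auto intro!: mult_left_mono mult_right_mono)

lemma top_grid_geometric:
  assumes b: "1 / exp 1 \<le> b" and x: "0 \<le> x" and top: "b * exp (N * x) = 1"
  shows "top_grid N (geometric_grid b x) (geometric_weight N x)"
proof -
  have b0: "0 < b"
    using b by (smt (verit) exp_gt_zero divide_pos_pos)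
  have "ln b + N * x = 0"
    using arg_cong[OF top, of ln] b0 by (simp add: ln_mult)
  then have "N * x = - ln b"
    by simp
  also have "\<dots> \<le> 1"
    using b b0 ln_le_cancel_iff[of "1 / exp 1" b] by (simp add: ln_div)
  finally have "N * (1 - exp (- x)) \<le> 1"
    using mult_left_mono[OF one_minus_exp_minus_le[of x], of "real N"] by simp
  then have "0 \<le> geometric_weight N x k" for k
    using x unfolding geometric_weight_def by simp
  moreover have "0 < geometric_grid b x k" for k
    using b0 unfolding geometric_grid_def by simp
  moreover have "geometric_grid b x k \<le> 1" if "k \<le> N" for k
    using geometric_grid_mono[OF b0 x that] top unfolding geometric_grid_def by simp
  moreover have "(\<Sum>k\<le>N. geometric_weight N x k) = 1"
    by (simp add: sum.atMost_shift geometric_weight_0 geometric_weight_Suc)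
  ultimately show ?thesis
    unfolding top_grid_def by simp
qed

lemma geometric_grid_shortfall_le:
  assumes b: "0 < b" and x: "0 \<le> x" and top: "b * exp (N * x) = 1" and s: "b \<le> s" "s \<le> 1"
  shows "s - (\<Sum>k\<in>{k\<in>{..N}. geometric_grid b x k \<le> s}. geometric_weight N x k * geometric_grid b x k)
    \<le> x + b * (N * x)"
proof -
  define D where "D = geometric_grid b x"
  define e where "e = 1 - exp (- x)"
  define t where "t = s * exp (- x)"
  have e: "0 \<le> e" "e \<le> x"
    unfolding e_def using x one_minus_exp_minus_le by auto
  have D0: "D 0 = b" and DN: "D N = 1"
    unfolding D_def geometric_grid_def using top by simp_all
  have t: "t \<le> 1"
    unfolding t_def using s x by (simp add: mult_le_one)
  have step: "min (D (Suc j)) t - min (D j) t \<le> (if D (Suc j) \<le> s then e * D (Suc j) else 0)" for j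
  proof -
    have mono: "D j \<le> D (Suc j)"
      unfolding D_def by (rule geometric_grid_mono[OF b x]) simp
    have Dj: "D j = D (Suc j) * exp (- x)"
      unfolding D_def by (rule geometric_grid_Suc)
    show ?thesis
    proof (cases "D (Suc j) \<le> s")
      case True
      have "e * D (Suc j) = D (Suc j) - D j"
        unfolding e_def Dj by (simp add: algebra_simps)
      then show ?thesis
        using True mono by (simp add: min_def)
    next
      case False
      then have "t \<le> D j"
        unfolding t_def Dj by simp
      then show ?thesis
        using False mono by (simp add: min_def)
    qed
  qed
  define T where "T = (\<Sum>k\<in>{k\<in>{..N}. D k \<le> s}. geometric_weight N x k * D k)"
  have "T = (\<Sum>k\<le>N. if D k \<le> s then geometric_weight N x k * D k else 0)"
    unfolding T_def by (rule sum.inter_filter) simp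
  also have "\<dots> = geometric_weight N x 0 * b
      + (\<Sum>j<N. if D (Suc j) \<le> s then geometric_weight N x (Suc j) * D (Suc j) else 0)"
    using s D0 by (simp add: sum.atMost_shift)
  also have "\<dots> = b - b * (N * e) + (\<Sum>j<N. if D (Suc j) \<le> s then e * D (Suc j) else 0)"
    unfolding geometric_weight_0 geometric_weight_Suc e_def by (simp add: algebra_simps)
  finally have "T = b - b * (N * e) + (\<Sum>j<N. if D (Suc j) \<le> s then e * D (Suc j) else 0)" .
  moreover have "(\<Sum>j<N. min (D (Suc j)) t - min (D j) t)
      \<le> (\<Sum>j<N. if D (Suc j) \<le> s then e * D (Suc j) else 0)"
    using step by (intro sum_mono)
  moreover have "(\<Sum>j<N. min (D (Suc j)) t - min (D j) t) = t - min b t"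
    using sum_lessThan_telescope[of "\<lambda>k. min (D k) t" N] t D0 DN by simp
  moreover have "t = s - s * e" "min b t \<le> b"
    unfolding t_def e_def by (simp_all add: algebra_simps)
  ultimately have "s - T \<le> s * e + b * (N * e)"
    by linarith
  also have "\<dots> \<le> x + b * (N * x)"
    using s b e mult_mono[of s 1 e x] by (intro add_mono mult_left_mono) auto
  finally show ?thesis
    unfolding T_def D_def .
qed

context prior
begin

definition \<beta> :: real where
  "\<beta> = max (\<mu> n) (1 / exp 1)"

lemma \<beta>_pos: "0 < \<beta>"
  unfolding \<beta>_def using prior_last_pos by simp

lemma \<beta>_le_1: "\<beta> \<le> 1"
  unfolding \<beta>_def using prior_last_le_1 by simp

lemma minus_ln_\<beta>_nonneg: "0 \<le> - ln \<beta>"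
  using \<beta>_pos \<beta>_le_1 by simp

lemma regret_value_eq: "- \<beta> * ln \<beta> = (if \<mu> n \<le> 1 / exp 1 then 1 / exp 1 else - \<mu> n * ln (\<mu> n))"
  unfolding \<beta>_def by (simp add: ln_div)

lemma Reg_MON_le_approx: "Reg_MON n \<mu> \<le> - \<beta> * ln \<beta> + - ln \<beta> / real (Suc m)"
proof -
  define N where "N = Suc m"
  define x where "x = - ln \<beta> / N"
  have x: "0 \<le> x"
    unfolding x_def using minus_ln_\<beta>_nonneg by (intro divide_nonneg_nonneg) simp_all
  have top: "\<beta> * exp (N * x) = 1"
    unfolding x_def N_def using \<beta>_pos by (simp add: exp_minus)
  have grid: "top_grid N (geometric_grid \<beta> x) (geometric_weight N x)"
    by (rule top_grid_geometric[OF _ x top]) (simp add: \<beta>_def)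
  have "s - (\<Sum>k\<in>{k\<in>{..N}. geometric_grid \<beta> x k \<le> s}. geometric_weight N x k * geometric_grid \<beta> x k)
      \<le> - \<beta> * ln \<beta> + x" if s: "\<mu> n \<le> s" "s \<le> 1" for s
  proof (cases "\<beta> \<le> s")
    case True
    then show ?thesis
      using geometric_grid_shortfall_le[OF \<beta>_pos x top True s(2)] unfolding x_def N_def by simp
  next
    case False
    then have "\<beta> = 1 / exp 1"
      using s unfolding \<beta>_def by (auto simp: max_def split: if_splits)
    moreover have "0 \<le> (\<Sum>k\<in>{k\<in>{..N}. geometric_grid \<beta> x k \<le> s}.
        geometric_weight N x k * geometric_grid \<beta> x k)"
      using grid unfolding top_grid_def by (intro sum_nonneg) auto
    ultimately show ?thesis
      using False x by (simp add: ln_div)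
  qed
  moreover have "0 \<le> - \<beta> * ln \<beta> + x"
    using mult_nonneg_nonneg[OF less_imp_le[OF \<beta>_pos] minus_ln_\<beta>_nonneg] x by simp
  ultimately have "regret_MON n \<mu> (top_scheme N (geometric_grid \<beta> x) (geometric_weight N x))
      \<le> - \<beta> * ln \<beta> + x"
    by (intro regret_MON_top_scheme_le[OF grid])
  then show ?thesis
    using Reg_MON_le_regret_MON[OF scheme_top_scheme[OF grid]] unfolding x_def N_def by simp
qed

lemma Reg_MON_le: "Reg_MON n \<mu> \<le> - \<beta> * ln \<beta>"
  using Reg_MON_le_approx by (rule le_of_le_plus_div_Suc)

end

section \<open>Lower bound\<close>

context prior
begin

definition threshold_util :: "real \<Rightarrow> nat \<Rightarrow> real" where
  "threshold_util \<theta> i = (if i = n then 1 - \<theta> else - \<theta>)"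

lemma mon_util_threshold_util: "mon_util n (threshold_util \<theta>)"
  unfolding mon_util_def threshold_util_def by auto

lemma top_value_threshold_util:
  assumes "0 \<le> z" "z \<le> 1"
  shows "top_value (threshold_util \<theta>) z = top_mass n z - \<theta> * z"
proof -
  have "top_value (threshold_util \<theta>) z
      = (\<Sum>i=1..n. - \<theta> * top_mass i z) + (\<Sum>i=1..n. if i = n then top_mass n z else 0)"
    unfolding top_value_def threshold_util_def sum.distrib[symmetric]
    by (intro sum.cong) (auto simp: algebra_simps)
  then show ?thesis
    using sum_top_mass[OF assms] n_ge_1 by (simp add: sum_negf sum_distrib_left[symmetric])
qed

end

lemma (in signaling_scheme) adopt_set_threshold_util:
  assumes "s \<in> space \<nu>"
  shows "s \<in> adopt_set (threshold_util \<theta>) \<longleftrightarrow> \<theta> * (\<Sum>i=1..n. post i s) \<le> post n s"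
proof -
  have "(\<Sum>i=1..n. post i s * threshold_util \<theta> i)
      = (\<Sum>i=1..n. - \<theta> * post i s) + (\<Sum>i=1..n. if i = n then post n s else 0)"
    unfolding threshold_util_def sum.distrib[symmetric]
    by (intro sum.cong) (auto simp: algebra_simps)
  also have "\<dots> = post n s - \<theta> * (\<Sum>i=1..n. post i s)"
    using n_ge_1 by (simp add: sum_distrib_left sum_negf)
  finally show ?thesis
    using assms unfolding adopt_set_def by auto
qed

text \<open>At every signal the threshold utilities \<open>\<theta> k\<close> contribute at most the posterior of
  state \<open>n\<close> (by \<open>sum_increment_threshold_le\<close>), whose integral is \<open>\<mu> n\<close>.\<close>

lemma (in signaling_scheme) sum_increment_sender_util_threshold_le:
  assumes mono: "incseq \<theta>" and \<theta>0: "0 \<le> \<theta> 0"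
  shows "(\<Sum>k\<le>m. increment \<theta> k * sender_util n \<mu> \<pi> (threshold_util (\<theta> k))) \<le> \<mu> n"
proof -
  let ?P = "\<lambda>s. \<Sum>i=1..n. post i s"
  let ?f = "\<lambda>k s. increment \<theta> k * (indicator (adopt_set (threshold_util (\<theta> k))) s * ?P s)"
  have n: "n \<in> {1..n}"
    using n_ge_1 by simp
  have int: "integrable \<nu> (\<lambda>s. indicator (adopt_set u) s * ?P s)" for u
    using integrable_weighted_posterior[OF adopt_set_sets, where w="\<lambda>_. 1"] by simp
  have "(\<Sum>k\<le>m. increment \<theta> k * sender_util n \<mu> \<pi> (threshold_util (\<theta> k))) = (\<Sum>k\<le>m. \<integral>s. ?f k s \<partial>\<nu>)"
    by (simp add: sender_util_eq_integral)
  also have "\<dots> = (\<integral>s. (\<Sum>k\<le>m. ?f k s) \<partial>\<nu>)"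
    by (intro Bochner_Integration.integral_sum[symmetric] integrable_mult_right int)
  also have "\<dots> \<le> (\<integral>s. indicator (space \<nu>) s * post n s \<partial>\<nu>)"
  proof (rule integral_mono)
    show "integrable \<nu> (\<lambda>s. \<Sum>k\<le>m. ?f k s)"
      by (intro Bochner_Integration.integrable_sum integrable_mult_right int)
    show "integrable \<nu> (\<lambda>s. indicator (space \<nu>) s * post n s)"
      by (rule integrable_posterior[OF n sets.top])
    fix s assume s: "s \<in> space \<nu>"
    have "(\<Sum>k\<le>m. ?f k s) = (\<Sum>k\<le>m. increment \<theta> k * (if \<theta> k * ?P s \<le> post n s then ?P s else 0))"
      using adopt_set_threshold_util[OF s] by (intro sum.cong) auto
    also have "\<dots> \<le> post n s"
    proof -
      have "0 \<le> ?P s"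
        using posterior_nonneg by (intro sum_nonneg) simp
      then show ?thesis
        using sum_increment_threshold_le[OF mono \<theta>0 _ posterior_nonneg[OF n], of "?P s" s m] by simp
    qed
    finally show "(\<Sum>k\<le>m. ?f k s) \<le> indicator (space \<nu>) s * post n s"
      using s by simp
  qed
  also have "\<dots> = \<mu> n"
    using integral_posterior[OF n sets.top] prob_space.prob_space[OF prob_space_scheme[OF n]]
      space_scheme_signal_dist[OF n] by simp
  finally show ?thesis .
qed

context prior
begin

text \<open>Revealing the top mass \<open>\<mu> n / \<theta>\<close> puts posterior exactly \<open>\<theta>\<close> on state \<open>n\<close>.\<close>

lemma opt_util_threshold_util_ge:
  assumes \<theta>: "\<mu> n \<le> \<theta>" "\<theta> \<le> 1"
  shows "\<mu> n / \<theta> \<le> opt_util n \<mu> (threshold_util \<theta>)"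
proof -
  define z where "z = \<mu> n / \<theta>"
  have "0 < \<theta>"
    using \<theta> prior_last_pos by simp
  have z: "0 < z" "z \<le> 1" "\<mu> n \<le> z"
    unfolding z_def using \<theta> \<open>0 < \<theta>\<close> prior_last_pos by (auto simp: field_simps)
  have grid: "top_grid 0 (\<lambda>_. z) (\<lambda>_. 1)"
    unfolding top_grid_def using z by simp
  have "top_value (threshold_util \<theta>) z = 0"
    using top_value_threshold_util[of z \<theta>] top_mass_last[of z] z \<open>0 < \<theta>\<close>
    unfolding z_def by simp
  then have "z \<le> sender_util n \<mu> (top_scheme 0 (\<lambda>_. z) (\<lambda>_. 1)) (threshold_util \<theta>)"
    using sender_util_top_scheme_ge[OF grid, of "threshold_util \<theta>"] by simp
  also have "\<dots> \<le> opt_util n \<mu> (threshold_util \<theta>)"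
    by (rule sender_util_le_opt_util[OF scheme_top_scheme[OF grid]])
  finally show ?thesis
    unfolding z_def .
qed

lemma regret_MON_lower_sum:
  assumes \<pi>: "scheme n \<pi>" and mono: "incseq \<theta>" and \<theta>: "\<mu> n \<le> \<theta> 0" "\<theta> N \<le> 1"
  shows "\<mu> n * (\<Sum>k\<le>N. increment \<theta> k / \<theta> k) - regret_MON n \<mu> \<pi> * \<theta> N \<le> \<mu> n"
proof -
  interpret signaling_scheme n \<mu> \<pi>
    by unfold_locales (rule \<pi>)
  have inc: "0 \<le> increment \<theta> k" for k
    using increment_nonneg[OF mono] \<theta> prior_last_pos by simp
  have "\<mu> n / \<theta> k - regret_MON n \<mu> \<pi> \<le> sender_util n \<mu> \<pi> (threshold_util (\<theta> k))" if "k \<le> N" for k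
  proof -
    have "\<mu> n \<le> \<theta> k" "\<theta> k \<le> 1"
      using \<theta> mono that by (auto dest: incseqD[of _ 0 k] incseqD[of _ k N])
    then show ?thesis
      using opt_util_threshold_util_ge[of "\<theta> k"]
        regret_le_regret_MON[OF \<pi> mon_util_threshold_util, of "\<theta> k"] by linarith
  qed
  then have "(\<Sum>k\<le>N. increment \<theta> k * (\<mu> n / \<theta> k - regret_MON n \<mu> \<pi>))
      \<le> (\<Sum>k\<le>N. increment \<theta> k * sender_util n \<mu> \<pi> (threshold_util (\<theta> k)))"
    using inc by (intro sum_mono mult_left_mono) auto
  also have "\<dots> \<le> \<mu> n"
    using sum_increment_sender_util_threshold_le[OF mono] \<theta> prior_last_pos by simp
  moreover have "(\<Sum>k\<le>N. increment \<theta> k * (\<mu> n / \<theta> k - regret_MON n \<mu> \<pi>))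
      = \<mu> n * (\<Sum>k\<le>N. increment \<theta> k / \<theta> k) - regret_MON n \<mu> \<pi> * \<theta> N"
    by (simp add: algebra_simps sum_subtractf sum_distrib_left sum_distrib_right[symmetric]
        sum_increment)
  ultimately show ?thesis
    by linarith
qed

lemma regret_MON_ge_approx:
  assumes \<pi>: "scheme n \<pi>"
  shows "- \<beta> * ln \<beta> \<le> regret_MON n \<mu> \<pi> + regret_MON n \<mu> \<pi> * - ln \<beta> / real (Suc m)"
proof -
  define r where "r = regret_MON n \<mu> \<pi>"
  define L where "L = - ln \<beta>"
  define N where "N = Suc m"
  define x where "x = L / N"
  define e where "e = 1 - exp (- x)"
  define \<theta> where "\<theta> k = \<mu> n * exp (real k * x)" for k
  have x: "0 \<le> x"
    unfolding x_def L_def using minus_ln_\<beta>_nonneg by (intro divide_nonneg_nonneg) simp_all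
  have NL: "N * x = L"
    unfolding x_def N_def by simp
  have mono: "incseq \<theta>"
    unfolding \<theta>_def using x prior_last_pos by (intro incseq_SucI) (simp add: distrib_right)
  have \<theta>0: "\<mu> n \<le> \<theta> 0"
    unfolding \<theta>_def by simp
  have \<theta>N: "\<theta> N = \<mu> n / \<beta>"
    unfolding \<theta>_def NL L_def using \<beta>_pos by (simp add: exp_minus field_simps)
  have "\<theta> N \<le> 1"
    unfolding \<theta>N using \<beta>_pos by (simp add: \<beta>_def)
  then have "\<mu> n * (\<Sum>k\<le>N. increment \<theta> k / \<theta> k) - r * \<theta> N \<le> \<mu> n"
    unfolding r_def by (rule regret_MON_lower_sum[OF \<pi> mono \<theta>0])
  moreover have "(\<Sum>k\<le>N. increment \<theta> k / \<theta> k) = 1 + N * e"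
    unfolding \<theta>_def e_def by (rule sum_increment_geometric[OF prior_last_pos])
  ultimately have "\<mu> n * (1 + N * e) - r * (\<mu> n / \<beta>) \<le> \<mu> n"
    using \<theta>N by simp
  then have "\<mu> n * (\<beta> * (N * e)) \<le> \<mu> n * r"
    using \<beta>_pos by (simp add: field_simps)
  then have Ne: "\<beta> * (N * e) \<le> r"
    by (rule mult_le_cancel_left_pos[OF prior_last_pos, THEN iffD1])
  have "x \<le> (1 + x) * e"
    using one_minus_exp_minus_ge[OF x] x unfolding e_def by (simp add: field_simps)
  then have "L \<le> (1 + x) * (N * e)"
    unfolding NL[symmetric] using mult_left_mono[of x "(1 + x) * e" N] by (simp add: algebra_simps)
  then have "\<beta> * L \<le> \<beta> * ((1 + x) * (N * e))"
    using \<beta>_pos by (intro mult_left_mono) auto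
  also have "\<dots> = (1 + x) * (\<beta> * (N * e))"
    by (simp add: algebra_simps)
  also have "\<dots> \<le> (1 + x) * r"
    using Ne x by (intro mult_left_mono) auto
  also have "\<dots> = r + r * L / N"
    unfolding x_def by (simp add: algebra_simps)
  finally show ?thesis
    unfolding r_def L_def N_def by simp
qed

lemma regret_MON_ge: "scheme n \<pi> \<Longrightarrow> - \<beta> * ln \<beta> \<le> regret_MON n \<mu> \<pi>"
  by (rule le_of_le_plus_div_Suc) (rule regret_MON_ge_approx)

end

theorem theorem2:
  fixes n :: nat and \<mu> :: "nat \<Rightarrow> real"
  assumes "n \<ge> 1"
    and "\<forall>i\<in>{1..n}. \<mu> i > 0"
    and "(\<Sum>i=1..n. \<mu> i) = 1"
  shows "Reg_MON n \<mu> = (if \<mu> n \<le> 1 / exp 1 then 1 / exp 1 else - \<mu> n * ln (\<mu> n))"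
proof -
  interpret prior n \<mu>
    using assms by unfold_locales
  have "Reg_MON n \<mu> = - \<beta> * ln \<beta>"
    using Reg_MON_le le_Reg_MON[OF regret_MON_ge] by (rule order_antisym)
  then show ?thesis
    using regret_value_eq by simp
qed

end
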